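(* Let $q\ge 1$ be an integer and consider an instance of \textsc{Min-Lin-Eq$(q)$-Full} on the complete graph $G=(V,E)$ with $n=|V|$ vertices, given by integers $c_{uv}\in\{0,\dots,q-1\}$ for every ordered pair of distinct vertices with $c_{vu}\equiv -c_{uv}\pmod q$. Let $\mathrm{OPT_{val}}$ be the minimum, over all assignments $x:V\to\{0,\dots,q-1\}$, of the number of edges $uv$ whose constraint $x_u-x_v\equiv c_{uv}\pmod q$ is violated. Run the Pivot Algorithm: choose a pivot $p\in V$ uniformly at random, set $\ell(p)=0$ and $\ell(v)=c_{vp}$ for every $v\neq p$. Then the Pivot Algorithm is a $3$-approximation algorithm for this problem, i.e. the expected number of edges whose constraints are violated by the labeling $\ell$ is at most $3\cdot \mathrm{OPT_{val}}$.
   Context: \textsc{Min-Lin-Eq$(q)$-Full}: given a complete simple graph $G=(V,E)$, a positive integer $q$, and for each ordered pair $(u,v)$ of distinct vertices an integer $c_{uv}\in[q]=\{0,\dots,q-1\}$ with $c_{vu}=q-c_{uv}\bmod q$, each edge $uv$ carries the constraint $x_u-x_v\equiv c_{uv}\pmod q$ on an assignment $x:V\to[q]$. The goal is to find a minimum-cardinality set of edges whose deletion leaves a satisfiable set of constraints, equivalently an assignment minimizing the number of violated edge constraints. *)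

theory Defs
  imports Complex_Main "HOL-Number_Theory.Cong"
begin

definition valid_instance :: "'a set \<Rightarrow> int \<Rightarrow> ('a \<Rightarrow> 'a \<Rightarrow> int) \<Rightarrow> bool" where
  "valid_instance V q c \<longleftrightarrow> finite V \<and> q \<ge> 1 \<and>
     (\<forall>u\<in>V. \<forall>v\<in>V. u \<noteq> v \<longrightarrow> c u v \<in> {0..<q} \<and> [c v u = - c u v] (mod q))"

definition edges :: "'a set \<Rightarrow> 'a set set" where
  "edges V = {{u, v} | u v. u \<in> V \<and> v \<in> V \<and> u \<noteq> v}"

definition violated :: "int \<Rightarrow> ('a \<Rightarrow> 'a \<Rightarrow> int) \<Rightarrow> ('a \<Rightarrow> int) \<Rightarrow> 'a \<Rightarrow> 'a \<Rightarrow> bool" where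
  "violated q c x u v \<longleftrightarrow> \<not> [x u - x v = c u v] (mod q)"

text \<open>Number of edges whose constraint is violated by the assignment x.
  (By antisymmetry of c, violated q c x u v and violated q c x v u agree.)\<close>
definition cost :: "'a set \<Rightarrow> int \<Rightarrow> ('a \<Rightarrow> 'a \<Rightarrow> int) \<Rightarrow> ('a \<Rightarrow> int) \<Rightarrow> nat" where
  "cost V q c x = card {e \<in> edges V. \<exists>u v. e = {u, v} \<and> u \<noteq> v \<and> violated q c x u v}"

definition assignments :: "'a set \<Rightarrow> int \<Rightarrow> ('a \<Rightarrow> int) set" where
  "assignments V q = {x. (\<forall>v\<in>V. x v \<in> {0..<q}) \<and> (\<forall>v. v \<notin> V \<longrightarrow> x v = 0)}"

definition OPT_val :: "'a set \<Rightarrow> int \<Rightarrow> ('a \<Rightarrow> 'a \<Rightarrow> int) \<Rightarrow> nat" where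
  "OPT_val V q c = Min (cost V q c ` assignments V q)"

definition pivot_label :: "('a \<Rightarrow> 'a \<Rightarrow> int) \<Rightarrow> 'a \<Rightarrow> 'a \<Rightarrow> int" where
  "pivot_label c p v = (if v = p then 0 else c v p)"

definition expected_pivot_cost :: "'a set \<Rightarrow> int \<Rightarrow> ('a \<Rightarrow> 'a \<Rightarrow> int) \<Rightarrow> real" where
  "expected_pivot_cost V q c = (\<Sum>p\<in>V. real (cost V q c (pivot_label c p))) / real (card V)"

end

theory Submission
  imports Defs
begin

text \<open>Compare the labelling of a pivot p with any assignment x. If the labelling
  violates an edge uv, then u, v \<noteq> p and x violates uv, up or vp: the labels c u p and
  c v p satisfy the constraints on up and vp, so agreeing with x there forces agreement
  on uv. Hence pivot p pays at most cost x plus n for every edge wp violated by x (the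
  edges at w), and every edge violated by x lies at exactly two pivots. Averaging over
  the n pivots gives at most cost x + 2 cost x, for x optimal.\<close>

definition violated_edges :: "'a set \<Rightarrow> int \<Rightarrow> ('a \<Rightarrow> 'a \<Rightarrow> int) \<Rightarrow> ('a \<Rightarrow> int) \<Rightarrow> 'a set set"
  where "violated_edges V q c x = {e \<in> edges V. \<exists>u v. e = {u, v} \<and> u \<noteq> v \<and> violated q c x u v}"

lemma cost_eq_card_violated_edges: "cost V q c x = card (violated_edges V q c x)"
  by (simp add: cost_def violated_edges_def)

lemma violated_edges_subset_edges: "violated_edges V q c x \<subseteq> edges V"
  by (auto simp: violated_edges_def)

lemma doubleton_in_violated_edgesI:
  "u \<in> V \<Longrightarrow> v \<in> V \<Longrightarrow> u \<noteq> v \<Longrightarrow> violated q c x u v \<Longrightarrow> {u, v} \<in> violated_edges V q c x"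
  unfolding violated_edges_def edges_def by blast

lemma finite_edges: "finite V \<Longrightarrow> finite (edges V)"
  by (rule finite_subset[of _ "Pow V"]) (auto simp: edges_def)

lemma card_edges_containing_le:
  assumes "finite V"
  shows "card {e \<in> edges V. w \<in> e} \<le> card V"
proof -
  have "{e \<in> edges V. w \<in> e} \<subseteq> (\<lambda>v. {w, v}) ` V"
    by (auto simp: edges_def insert_commute)
  then have "card {e \<in> edges V. w \<in> e} \<le> card ((\<lambda>v. {w, v}) ` V)"
    using assms by (intro card_mono) auto
  also have "\<dots> \<le> card V"
    by (rule card_image_le[OF assms])
  finally show ?thesis .
qed

lemma card_neighbours_eq_degree:
  assumes "B \<subseteq> edges V"
  shows "card {w \<in> V. {w, p} \<in> B} = card {e \<in> B. p \<in> e}"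
proof (rule bij_betw_same_card[of "\<lambda>w. {w, p}"])
  have "{e \<in> B. p \<in> e} \<subseteq> (\<lambda>w. {w, p}) ` {w \<in> V. {w, p} \<in> B}"
    using assms by (fastforce simp: edges_def insert_commute)
  then show "bij_betw (\<lambda>w. {w, p}) {w \<in> V. {w, p} \<in> B} {e \<in> B. p \<in> e}"
    by (auto simp: bij_betw_def inj_on_def doubleton_eq_iff)
qed

lemma sum_degree_eq_twice_card:
  assumes "finite V" "B \<subseteq> edges V"
  shows "(\<Sum>p\<in>V. card {e \<in> B. p \<in> e}) = 2 * card B"
proof (rule sum_multicount)
  show "finite B"
    using assms finite_edges finite_subset by blast
  show "\<forall>e\<in>B. card {p \<in> V. p \<in> e} = 2"
  proof
    fix e assume "e \<in> B"
    then obtain u v where "e = {u, v}" "u \<in> V" "v \<in> V" "u \<noteq> v"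
      using assms(2) by (auto simp: edges_def)
    then have "{p \<in> V. p \<in> e} = {u, v}"
      by auto
    then show "card {p \<in> V. p \<in> e} = 2"
      using \<open>u \<noteq> v\<close> by simp
  qed
qed (use assms in auto)

lemma pivot_label_violated_imp:
  assumes val: "valid_instance V q c" and "p \<in> V" "u \<in> V" "v \<in> V" "u \<noteq> v"
    and viol: "violated q c (pivot_label c p) u v"
  shows "u \<noteq> p \<and> v \<noteq> p \<and> (violated q c x u v \<or> violated q c x u p \<or> violated q c x v p)"
proof (intro conjI)
  show "v \<noteq> p"
    using viol \<open>u \<noteq> v\<close> by (auto simp: violated_def pivot_label_def)
  have "[c p v = - c v p] (mod q)"
    using val \<open>p \<in> V\<close> \<open>v \<in> V\<close> \<open>v \<noteq> p\<close> by (auto simp: valid_instance_def)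
  then show "u \<noteq> p"
    using viol \<open>v \<noteq> p\<close> by (auto simp: violated_def pivot_label_def cong_sym)
  show "violated q c x u v \<or> violated q c x u p \<or> violated q c x v p"
  proof (rule ccontr)
    assume "\<not> ?thesis"
    then have uv: "[x u - x v = c u v] (mod q)"
      and up: "[x u - x p = c u p] (mod q)" and vp: "[x v - x p = c v p] (mod q)"
      by (auto simp: violated_def)
    have "[x u - x v = c u p - c v p] (mod q)"
      using cong_diff[OF up vp] by simp
    then have "[c u p - c v p = c u v] (mod q)"
      using uv by (metis cong_sym cong_trans)
    then show False
      using viol \<open>u \<noteq> p\<close> \<open>v \<noteq> p\<close> by (simp add: violated_def pivot_label_def)
  qed
qed

lemma violated_edges_pivot_label_subset:
  assumes "valid_instance V q c" "p \<in> V"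
  shows "violated_edges V q c (pivot_label c p) \<subseteq> violated_edges V q c x \<union>
    (\<Union>w \<in> {w \<in> V. {w, p} \<in> violated_edges V q c x}. {e \<in> edges V. w \<in> e})"
proof
  fix e assume "e \<in> violated_edges V q c (pivot_label c p)"
  then obtain u v where e: "e \<in> edges V" "e = {u, v}" "u \<noteq> v"
    and viol: "violated q c (pivot_label c p) u v"
    unfolding violated_edges_def by blast
  moreover have "e \<subseteq> V"
    using e(1) by (auto simp: edges_def)
  ultimately have "u \<in> V" "v \<in> V"
    by auto
  from pivot_label_violated_imp[OF assms \<open>u \<in> V\<close> \<open>v \<in> V\<close> e(3) viol, of x]
  consider "violated q c x u v" | "u \<noteq> p" "violated q c x u p" | "v \<noteq> p" "violated q c x v p"
    by blast
  then show "e \<in> violated_edges V q c x \<union>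
    (\<Union>w \<in> {w \<in> V. {w, p} \<in> violated_edges V q c x}. {e \<in> edges V. w \<in> e})"
  proof cases
    case 1
    then show ?thesis
      using e \<open>u \<in> V\<close> \<open>v \<in> V\<close> by (simp add: doubleton_in_violated_edgesI)
  next
    case 2
    then have "{u, p} \<in> violated_edges V q c x"
      using \<open>u \<in> V\<close> \<open>p \<in> V\<close> by (simp add: doubleton_in_violated_edgesI)
    then show ?thesis
      using e \<open>u \<in> V\<close> by blast
  next
    case 3
    then have "{v, p} \<in> violated_edges V q c x"
      using \<open>v \<in> V\<close> \<open>p \<in> V\<close> by (simp add: doubleton_in_violated_edgesI)
    then show ?thesis
      using e \<open>v \<in> V\<close> by blast
  qed
qed

lemma cost_pivot_label_le:
  assumes val: "valid_instance V q c" and "p \<in> V"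
  shows "cost V q c (pivot_label c p)
    \<le> cost V q c x + card V * card {w \<in> V. {w, p} \<in> violated_edges V q c x}"
proof -
  let ?B = "violated_edges V q c x" and ?W = "{w \<in> V. {w, p} \<in> violated_edges V q c x}"
  let ?N = "\<Union>w\<in>?W. {e \<in> edges V. w \<in> e}"
  have "finite V"
    using val by (simp add: valid_instance_def)
  have "?B \<union> ?N \<subseteq> edges V"
    using violated_edges_subset_edges by blast
  then have "finite (?B \<union> ?N)"
    using finite_edges[OF \<open>finite V\<close>] finite_subset by blast
  then have "cost V q c (pivot_label c p) \<le> card (?B \<union> ?N)"
    unfolding cost_eq_card_violated_edges
    by (intro card_mono violated_edges_pivot_label_subset[OF val \<open>p \<in> V\<close>])
  also have "\<dots> \<le> card ?B + card ?N"
    by (rule card_Un_le)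
  also have "\<dots> \<le> card ?B + (\<Sum>w\<in>?W. card {e \<in> edges V. w \<in> e})"
    using \<open>finite V\<close> by (intro add_left_mono card_UN_le) simp
  also have "\<dots> \<le> card ?B + (\<Sum>w\<in>?W. card V)"
    using card_edges_containing_le[OF \<open>finite V\<close>] by (intro add_left_mono sum_mono)
  finally show ?thesis
    by (simp add: cost_eq_card_violated_edges mult.commute)
qed

lemma sum_cost_pivot_label_le:
  assumes val: "valid_instance V q c"
  shows "(\<Sum>p\<in>V. cost V q c (pivot_label c p)) \<le> 3 * card V * cost V q c x"
proof -
  let ?B = "violated_edges V q c x"
  have "finite V"
    using val by (simp add: valid_instance_def)
  have "(\<Sum>p\<in>V. cost V q c (pivot_label c p))
      \<le> (\<Sum>p\<in>V. cost V q c x + card V * card {w \<in> V. {w, p} \<in> ?B})"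
    using cost_pivot_label_le[OF val] by (intro sum_mono)
  also have "\<dots> = card V * cost V q c x + card V * (\<Sum>p\<in>V. card {e \<in> ?B. p \<in> e})"
    by (simp add: sum.distrib sum_distrib_left
        card_neighbours_eq_degree[OF violated_edges_subset_edges])
  also have "\<dots> = 3 * card V * cost V q c x"
    using sum_degree_eq_twice_card[OF \<open>finite V\<close> violated_edges_subset_edges]
    by (simp add: cost_eq_card_violated_edges)
  finally show ?thesis .
qed

lemma OPT_val_attained:
  assumes "valid_instance V q c"
  obtains x where "cost V q c x = OPT_val V q c"
proof -
  have "finite (edges V)"
    using assms by (simp add: valid_instance_def finite_edges)
  then have "cost V q c ` assignments V q \<subseteq> {..card (edges V)}"
    by (auto simp: cost_def intro!: card_mono)
  moreover have "(\<lambda>_. 0) \<in> assignments V q"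
    using assms by (simp add: valid_instance_def assignments_def)
  ultimately have "OPT_val V q c \<in> cost V q c ` assignments V q"
    unfolding OPT_val_def by (intro Min_in) (auto intro: finite_subset)
  then show ?thesis
    using that by (metis imageE)
qed

theorem theorem1:
  fixes V :: "'a set" and q :: int and c :: "'a \<Rightarrow> 'a \<Rightarrow> int"
  assumes "valid_instance V q c" and "V \<noteq> {}"
  shows "expected_pivot_cost V q c \<le> 3 * real (OPT_val V q c)"
proof -
  obtain x where opt: "cost V q c x = OPT_val V q c"
    using OPT_val_attained[OF assms(1)] .
  have "card V > 0"
    using assms by (simp add: valid_instance_def card_gt_0_iff)
  have "(\<Sum>p\<in>V. real (cost V q c (pivot_label c p))) \<le> real (3 * card V * OPT_val V q c)"
    using sum_cost_pivot_label_le[OF assms(1), of x] opt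
    by (metis of_nat_le_iff of_nat_sum)
  then show ?thesis
    using \<open>card V > 0\<close> by (simp add: expected_pivot_cost_def divide_le_eq mult_ac)
qed

end
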